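(* Let $q$ be a nonzero complex number with $q^4\ne 1$, and let $\zeta,\kappa,\zeta',\kappa'$ be nonzero complex numbers with $\zeta,\zeta'\neq\pm1$ and $\kappa^4\neq1$, $(\kappa')^4\ne1$. Then the space of $U_q(\mathfrak{gl}(1|1))$-module homomorphisms $V(\zeta,\kappa)\otimes V(\zeta',\kappa')\to V(\zeta',\kappa')\otimes V(\zeta,\kappa)$ is two-dimensional, spanned by the maps $R=R_{\zeta,\zeta'}$ and $R'=R'_{\zeta,\zeta'}$ defined by \[\phi(x\otimes x')=a_2\,x'\otimes x,\ \phi(x\otimes y')=c_2\,x'\otimes y+b_2\,y'\otimes x,\ \phi(y\otimes x')=b_1\,x'\otimes y+c_1\,y'\otimes x,\ \phi(y\otimes y')=a_1\,y'\otimes y\] with \[\begin{array}{c|cccccc} & a_1 & a_2 & b_1 & b_2 & c_1 & c_2\\\hline R & -\zeta\zeta' & 1 & \zeta' & \zeta & 1-\zeta^2 & 0\\ R' & 1 & -\zeta\zeta' & -\zeta & -\zeta' & 0 & 1-(\zeta')^2\end{array}\]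
   Context: $[\zeta]=\frac{\zeta-\zeta^{-1}}{q-q^{-1}}$. $U_q(\mathfrak{gl}(1|1))$ is the associative superalgebra generated by odd $E,F$ and even invertible commuting $W^{\pm1},K^{\pm1}$ with relations $KEK^{-1}=q^2E$, $KFK^{-1}=q^{-2}F$, $W$ central, $EF+FE=\frac{W-W^{-1}}{q-q^{-1}}$, $E^2=F^2=0$, with comultiplication $\Delta(W)=W\otimes W$, $\Delta(K)=K\otimes K$, $\Delta(E)=E\otimes W^{-1}+1\otimes E$, $\Delta(F)=F\otimes1+W\otimes F$; tensor products of modules use the sign rule $(a\otimes b)(v\otimes w)=(-1)^{|b||v|}(av\otimes bw)$. $V(\zeta,\kappa)$ is the module with basis $x$ (even), $y$ (odd): $Ex=0$, $Fx=y$, $Wx=\zeta x$, $Kx=\kappa x$, $Fy=0$, $Ey=[\zeta]x$, $Wy=\zeta y$, $Ky=q^{-2}\kappa y$; $V(\zeta',\kappa')$ similarly with basis $x',y'$. *)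

theory Defs
  imports Complex_Main
begin

datatype gen = GE | GF | GK | GKi | GW | GWi

definition qnum :: "complex \<Rightarrow> complex \<Rightarrow> complex" where
  "qnum q z = (z - inverse z) / (q - inverse q)"

text \<open>Matrices indexed by a finite basis: M i j = coefficient of basis vector i
  in the image of basis vector j.  Basis of V(zeta,kappa): False = x (even), True = y (odd).\<close>
type_synonym 'a mat = "'a \<Rightarrow> 'a \<Rightarrow> complex"

definition mmul :: "'a::finite mat \<Rightarrow> 'a mat \<Rightarrow> 'a mat" where
  "mmul A B = (\<lambda>i j. \<Sum>k\<in>UNIV. A i k * B k j)"

definition idm :: "'a mat" where
  "idm = (\<lambda>i j. if i = j then 1 else 0)"

definition repV :: "complex \<Rightarrow> complex \<Rightarrow> complex \<Rightarrow> gen \<Rightarrow> bool mat" where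
  "repV q \<zeta> \<kappa> g = (case g of
      GE \<Rightarrow> (\<lambda>i j. if \<not> i \<and> j then qnum q \<zeta> else 0)
    | GF \<Rightarrow> (\<lambda>i j. if i \<and> \<not> j then 1 else 0)
    | GW \<Rightarrow> (\<lambda>i j. if i = j then \<zeta> else 0)
    | GWi \<Rightarrow> (\<lambda>i j. if i = j then inverse \<zeta> else 0)
    | GK \<Rightarrow> (\<lambda>i j. if i = j then (if i then inverse (q^2) * \<kappa> else \<kappa>) else 0)
    | GKi \<Rightarrow> (\<lambda>i j. if i = j then inverse (if i then inverse (q^2) * \<kappa> else \<kappa>) else 0))"

text \<open>Tensor product a \<otimes> b of operators with the sign rule
  (a \<otimes> b)(v \<otimes> w) = (-1)^{|b||v|} (a v \<otimes> b w); pb is the parity of b.\<close>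
definition tens :: "bool \<Rightarrow> bool mat \<Rightarrow> bool mat \<Rightarrow> (bool \<times> bool) mat" where
  "tens pb A B = (\<lambda>(k, l) (i, j). (if pb \<and> i then -1 else 1) * A k i * B l j)"

text \<open>Action on V(zeta,kappa) \<otimes> V(zeta',kappa') through the comultiplication.\<close>
definition repVV :: "complex \<Rightarrow> complex \<Rightarrow> complex \<Rightarrow> complex \<Rightarrow> complex \<Rightarrow> gen
    \<Rightarrow> (bool \<times> bool) mat" where
  "repVV q \<zeta> \<kappa> \<zeta>' \<kappa>' g = (case g of
      GE \<Rightarrow> (\<lambda>a b. tens False (repV q \<zeta> \<kappa> GE) (repV q \<zeta>' \<kappa>' GWi) a b
                  + tens True idm (repV q \<zeta>' \<kappa>' GE) a b)
    | GF \<Rightarrow> (\<lambda>a b. tens False (repV q \<zeta> \<kappa> GF) idm a b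
                  + tens True (repV q \<zeta> \<kappa> GW) (repV q \<zeta>' \<kappa>' GF) a b)
    | _ \<Rightarrow> tens False (repV q \<zeta> \<kappa> g) (repV q \<zeta>' \<kappa>' g))"

text \<open>Module homomorphisms V(zeta,kappa)\<otimes>V(zeta',kappa') \<rightarrow> V(zeta',kappa')\<otimes>V(zeta,kappa),
  as matrices (every linear map between these finite-dimensional spaces is one).\<close>
definition is_hom :: "complex \<Rightarrow> complex \<Rightarrow> complex \<Rightarrow> complex \<Rightarrow> complex
    \<Rightarrow> (bool \<times> bool) mat \<Rightarrow> bool" where
  "is_hom q \<zeta> \<kappa> \<zeta>' \<kappa>' M \<longleftrightarrow>
     (\<forall>g. mmul M (repVV q \<zeta> \<kappa> \<zeta>' \<kappa>' g) = mmul (repVV q \<zeta>' \<kappa>' \<zeta> \<kappa> g) M)"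

text \<open>The map phi with parameters a1 a2 b1 b2 c1 c2.  Source index (i,j): i in V, j in V';
  target index (k,l): k in V', l in V.\<close>
definition phi :: "complex \<Rightarrow> complex \<Rightarrow> complex \<Rightarrow> complex \<Rightarrow> complex \<Rightarrow> complex
    \<Rightarrow> (bool \<times> bool) mat" where
  "phi a1 a2 b1 b2 c1 c2 = (\<lambda>t s.
     if s = (False, False) then (if t = (False, False) then a2 else 0)
     else if s = (False, True) then
       (if t = (False, True) then c2 else if t = (True, False) then b2 else 0)
     else if s = (True, False) then
       (if t = (False, True) then b1 else if t = (True, False) then c1 else 0)
     else (if t = (True, True) then a1 else 0))"

definition Rmap :: "complex \<Rightarrow> complex \<Rightarrow> (bool \<times> bool) mat" where
  "Rmap \<zeta> \<zeta>' = phi (- \<zeta> * \<zeta>') 1 \<zeta>' \<zeta> (1 - \<zeta>^2) 0"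

definition R'map :: "complex \<Rightarrow> complex \<Rightarrow> (bool \<times> bool) mat" where
  "R'map \<zeta> \<zeta>' = phi 1 (- \<zeta> * \<zeta>') (- \<zeta>) (- \<zeta>') 0 (1 - \<zeta>'^2)"

end

theory Submission
  imports Defs
begin

text \<open>K acts diagonally on both tensor products, with eigenvalue \<kappa>\<kappa>'q^(-2m) on basis vectors
  with m odd factors. Since q^2 \<noteq> 1 and q^4 \<noteq> 1 these eigenvalues are distinct, so a
  homomorphism preserves weight spaces and has the shape \<phi>(a1, a2, b1, b2, c1, c2). Commuting
  with E and F is then a homogeneous linear system in the six coefficients: the F-relations
  express a1, b1, c1 through a2, b2, c2, and a single E-relation cuts this down to a
  two-parameter family, which is the span of R and R'. In c R + d R' the coefficients a2 and c2
  are c - d\<zeta>\<zeta>' and d(1 - \<zeta>'^2), so R and R' are independent once \<zeta>'^2 \<noteq> 1.\<close>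

lemma sum_UNIV_bool_prod:
  "(\<Sum>x\<in>UNIV. f x) = f (False, False) + f (False, True) + f (True, False) + f (True, True)"
  by (simp add: UNIV_Times_UNIV[symmetric] sum.cartesian_product UNIV_bool add.assoc del: UNIV_Times_UNIV)

text \<open>The first four conjuncts are the E-relations, the last three the F-relations.\<close>

definition phi_hom_eqs :: "complex \<Rightarrow> complex \<Rightarrow> complex
    \<Rightarrow> complex \<Rightarrow> complex \<Rightarrow> complex \<Rightarrow> complex \<Rightarrow> complex \<Rightarrow> complex \<Rightarrow> bool" where
  "phi_hom_eqs q \<zeta> \<zeta>' a1 a2 b1 b2 c1 c2 \<longleftrightarrow>
     (let n = qnum q in
        a2 * n \<zeta> / \<zeta>' = n \<zeta> * b1 + n \<zeta>' / \<zeta> * c1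
      \<and> a2 * n \<zeta>' = n \<zeta> * c2 + n \<zeta>' / \<zeta> * b2
      \<and> b2 * n \<zeta> / \<zeta>' - c1 * n \<zeta>' = - (n \<zeta> * a1)
      \<and> c2 * n \<zeta> / \<zeta>' - b1 * n \<zeta>' = n \<zeta>' / \<zeta> * a1)
   \<and> c1 = a2 - \<zeta> * b2 \<and> b1 = \<zeta>' * a2 - \<zeta> * c2 \<and> a1 = c2 - \<zeta>' * b2"

lemmas rep_simps = mmul_def repVV_def tens_def repV_def idm_def sum_UNIV_bool_prod

lemma is_hom_phi_iff:
  "is_hom q \<zeta> \<kappa> \<zeta>' \<kappa>' (phi a1 a2 b1 b2 c1 c2) \<longleftrightarrow> phi_hom_eqs q \<zeta> \<zeta>' a1 a2 b1 b2 c1 c2"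
proof
  assume "is_hom q \<zeta> \<kappa> \<zeta>' \<kappa>' (phi a1 a2 b1 b2 c1 c2)"
  then have H: "\<And>g t s. mmul (phi a1 a2 b1 b2 c1 c2) (repVV q \<zeta> \<kappa> \<zeta>' \<kappa>' g) t s
                 = mmul (repVV q \<zeta>' \<kappa>' \<zeta> \<kappa> g) (phi a1 a2 b1 b2 c1 c2) t s"
    unfolding is_hom_def by metis
  show "phi_hom_eqs q \<zeta> \<zeta>' a1 a2 b1 b2 c1 c2"
    using H[of GE "(False, False)" "(True, False)"] H[of GE "(False, False)" "(False, True)"]
      H[of GE "(True, False)" "(True, True)"] H[of GE "(False, True)" "(True, True)"]
      H[of GF "(True, False)" "(False, False)"] H[of GF "(False, True)" "(False, False)"]
      H[of GF "(True, True)" "(False, True)"]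
    unfolding phi_hom_eqs_def Let_def by (simp add: rep_simps phi_def divide_inverse algebra_simps)
next
  assume "phi_hom_eqs q \<zeta> \<zeta>' a1 a2 b1 b2 c1 c2"
  then show "is_hom q \<zeta> \<kappa> \<zeta>' \<kappa>' (phi a1 a2 b1 b2 c1 c2)"
    unfolding is_hom_def phi_hom_eqs_def Let_def
    apply (intro allI ext)
    subgoal for g t s
      by (cases g; cases t; cases s) (auto simp: rep_simps phi_def divide_inverse algebra_simps)
    done
qed

lemma is_hom_eq_phi:
  assumes hom: "is_hom q \<zeta> \<kappa> \<zeta>' \<kappa>' M"
    and "q \<noteq> 0" "q ^ 4 \<noteq> 1" "\<kappa> \<noteq> 0" "\<kappa>' \<noteq> 0"
  shows "M = phi (M (True, True) (True, True)) (M (False, False) (False, False))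
                 (M (False, True) (True, False)) (M (True, False) (False, True))
                 (M (True, False) (True, False)) (M (False, True) (False, True))"
proof -
  have "(q ^ 2) ^ 2 \<noteq> 1"
    using \<open>q ^ 4 \<noteq> 1\<close> by (simp flip: power_mult)
  then have "q ^ 2 \<noteq> 1" "inverse (q ^ 2) * inverse (q ^ 2) \<noteq> 1"
    by (metis one_power2, metis power2_eq_square power_inverse inverse_eq_1_iff)
  have weight_space: "M (a, b) (c, d) = 0"
    if "(a \<or> b) \<noteq> (c \<or> d) \<or> (a \<and> b) \<noteq> (c \<and> d)" for a b c d
    using fun_cong[OF fun_cong[OF hom[unfolded is_hom_def, rule_format, of GK]], of "(a, b)" "(c, d)"]
      that assms \<open>q ^ 2 \<noteq> 1\<close> \<open>inverse (q ^ 2) * inverse (q ^ 2) \<noteq> 1\<close>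
    by (cases a; cases b; cases c; cases d) (simp_all add: rep_simps)
  show ?thesis
  proof (intro ext)
    fix t s :: "bool \<times> bool"
    show "M t s = phi (M (True, True) (True, True)) (M (False, False) (False, False))
                 (M (False, True) (True, False)) (M (True, False) (False, True))
                 (M (True, False) (True, False)) (M (False, True) (False, True)) t s"
      by (cases t; cases s) (auto simp: phi_def weight_space)
  qed
qed

lemma lin_comb_Rmap_R'map:
  "(\<lambda>t s. c * Rmap \<zeta> \<zeta>' t s + d * R'map \<zeta> \<zeta>' t s)
     = phi (d - c * \<zeta> * \<zeta>') (c - d * \<zeta> * \<zeta>') (c * \<zeta>' - d * \<zeta>) (c * \<zeta> - d * \<zeta>')
           (c * (1 - \<zeta>^2)) (d * (1 - \<zeta>'^2))"
  by (intro ext) (auto simp: Rmap_def R'map_def phi_def algebra_simps)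

lemma phi_hom_eqs_lin_comb:
  assumes "\<zeta> \<noteq> 0" "\<zeta>' \<noteq> 0"
  shows "phi_hom_eqs q \<zeta> \<zeta>' (d - c * \<zeta> * \<zeta>') (c - d * \<zeta> * \<zeta>') (c * \<zeta>' - d * \<zeta>) (c * \<zeta> - d * \<zeta>')
           (c * (1 - \<zeta>^2)) (d * (1 - \<zeta>'^2))"
proof -
  obtain Q where Q: "qnum q = (\<lambda>z. (z - inverse z) / Q)"
    unfolding qnum_def by blast
  show ?thesis
  proof (cases "Q = 0")
    case True
    then show ?thesis unfolding phi_hom_eqs_def Let_def Q by (simp add: algebra_simps power2_eq_square)
  next
    case False
    with assms show ?thesis unfolding phi_hom_eqs_def Let_def Q
      by (simp add: field_simps) (simp add: algebra_simps power2_eq_square)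
  qed
qed

lemma phi_hom_eqs_imp_lin_comb:
  assumes "q \<noteq> 0" "q ^ 2 \<noteq> 1" "\<zeta> \<noteq> 0" "\<zeta>' \<noteq> 0" "\<zeta>' ^ 2 \<noteq> 1"
    and eqs: "phi_hom_eqs q \<zeta> \<zeta>' a1 a2 b1 b2 c1 c2"
  shows "\<exists>c d. phi a1 a2 b1 b2 c1 c2 = (\<lambda>t s. c * Rmap \<zeta> \<zeta>' t s + d * R'map \<zeta> \<zeta>' t s)"
proof -
  define d where "d = c2 / (1 - \<zeta>' ^ 2)"
  define c where "c = a2 + \<zeta> * \<zeta>' * d"
  have c2: "c2 = d * (1 - \<zeta>' ^ 2)" and a2: "a2 = c - d * \<zeta> * \<zeta>'"
    using \<open>\<zeta>' ^ 2 \<noteq> 1\<close> by (simp_all add: d_def c_def)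
  define Q where "Q = q - inverse q"
  have "Q \<noteq> 0"
    using assms(1,2) by (auto simp: Q_def power2_eq_square field_simps)
  have "a2 * qnum q \<zeta>' = qnum q \<zeta> * c2 + qnum q \<zeta>' / \<zeta> * b2"
    using eqs by (simp add: phi_hom_eqs_def Let_def)
  then have "qnum q \<zeta>' * (\<zeta> * a2 - b2) = \<zeta> * qnum q \<zeta> * c2"
    using \<open>\<zeta> \<noteq> 0\<close> by (simp add: field_simps)
  then have "(\<zeta>' - inverse \<zeta>') * (\<zeta> * a2 - b2) = \<zeta> * (\<zeta> - inverse \<zeta>) * c2"
    using \<open>Q \<noteq> 0\<close> by (simp add: qnum_def flip: Q_def)
  moreover have "\<zeta> * (\<zeta> - inverse \<zeta>) = \<zeta>^2 - 1" "\<zeta>' * (\<zeta>' - inverse \<zeta>') = \<zeta>'^2 - 1"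
    using \<open>\<zeta> \<noteq> 0\<close> \<open>\<zeta>' \<noteq> 0\<close> by (simp_all add: right_diff_distrib power2_eq_square)
  ultimately have "(1 - \<zeta>' ^ 2) * (b2 - (c * \<zeta> - d * \<zeta>')) = 0"
    unfolding c2 a2 by algebra
  then have b2: "b2 = c * \<zeta> - d * \<zeta>'"
    using \<open>\<zeta>' ^ 2 \<noteq> 1\<close> by simp
  have "c1 = c * (1 - \<zeta>^2)" "b1 = c * \<zeta>' - d * \<zeta>" "a1 = d - c * \<zeta> * \<zeta>'"
    using eqs unfolding phi_hom_eqs_def a2 b2 c2
    by (simp_all add: algebra_simps power2_eq_square)
  with a2 b2 c2 show ?thesis
    unfolding lin_comb_Rmap_R'map by blast
qed

lemma Rmap_R'map_independent:
  assumes "\<zeta>' ^ 2 \<noteq> 1"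
    and "(\<lambda>t s. c * Rmap \<zeta> \<zeta>' t s + d * R'map \<zeta> \<zeta>' t s) = (\<lambda>t s. 0)"
  shows "c = 0 \<and> d = 0"
proof -
  have "c * Rmap \<zeta> \<zeta>' t s + d * R'map \<zeta> \<zeta>' t s = 0" for t s
    using assms(2) by metis
  from this[of "(False, True)" "(False, True)"] this[of "(False, False)" "(False, False)"]
  have "d * (1 - \<zeta>' ^ 2) = 0" "c - d * \<zeta> * \<zeta>' = 0"
    by (simp_all add: Rmap_def R'map_def phi_def)
  with assms(1) show ?thesis by simp
qed

theorem theorem4p3:
  fixes q \<zeta> \<kappa> \<zeta>' \<kappa>' :: complex
  assumes "q \<noteq> 0" "q ^ 4 \<noteq> 1"
    and "\<zeta> \<noteq> 0" "\<kappa> \<noteq> 0" "\<zeta>' \<noteq> 0" "\<kappa>' \<noteq> 0"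
    and "\<zeta> \<noteq> 1" "\<zeta> \<noteq> -1" "\<zeta>' \<noteq> 1" "\<zeta>' \<noteq> -1"
    and "\<kappa> ^ 4 \<noteq> 1" "\<kappa>' ^ 4 \<noteq> 1"
  shows "{M. is_hom q \<zeta> \<kappa> \<zeta>' \<kappa>' M}
           = {(\<lambda>t s. c * Rmap \<zeta> \<zeta>' t s + d * R'map \<zeta> \<zeta>' t s) | c d. True}
       \<and> (\<forall>c d. (\<lambda>t s. c * Rmap \<zeta> \<zeta>' t s + d * R'map \<zeta> \<zeta>' t s) = (\<lambda>t s. 0)
               \<longrightarrow> c = 0 \<and> d = 0)"
proof -
  have "(q ^ 2) ^ 2 \<noteq> 1"
    using \<open>q ^ 4 \<noteq> 1\<close> by (simp flip: power_mult)
  then have "q ^ 2 \<noteq> 1"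
    by (metis one_power2)
  have "\<zeta>' ^ 2 \<noteq> 1"
    using \<open>\<zeta>' \<noteq> 1\<close> \<open>\<zeta>' \<noteq> -1\<close> by (simp add: power2_eq_1_iff)
  have "is_hom q \<zeta> \<kappa> \<zeta>' \<kappa>' M \<longleftrightarrow>
          (\<exists>c d. M = (\<lambda>t s. c * Rmap \<zeta> \<zeta>' t s + d * R'map \<zeta> \<zeta>' t s))" for M
  proof
    assume hom: "is_hom q \<zeta> \<kappa> \<zeta>' \<kappa>' M"
    then obtain a1 a2 b1 b2 c1 c2 where M: "M = phi a1 a2 b1 b2 c1 c2"
      using is_hom_eq_phi assms(1,2,4,6) by blast
    with hom have "phi_hom_eqs q \<zeta> \<zeta>' a1 a2 b1 b2 c1 c2"
      by (simp add: is_hom_phi_iff)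
    with M assms(1,3,5) \<open>q ^ 2 \<noteq> 1\<close> \<open>\<zeta>' ^ 2 \<noteq> 1\<close>
    show "\<exists>c d. M = (\<lambda>t s. c * Rmap \<zeta> \<zeta>' t s + d * R'map \<zeta> \<zeta>' t s)"
      by (simp add: phi_hom_eqs_imp_lin_comb)
  next
    assume "\<exists>c d. M = (\<lambda>t s. c * Rmap \<zeta> \<zeta>' t s + d * R'map \<zeta> \<zeta>' t s)"
    with phi_hom_eqs_lin_comb[OF \<open>\<zeta> \<noteq> 0\<close> \<open>\<zeta>' \<noteq> 0\<close>]
    show "is_hom q \<zeta> \<kappa> \<zeta>' \<kappa>' M"
      by (auto simp: lin_comb_Rmap_R'map is_hom_phi_iff)
  qed
  with Rmap_R'map_independent[OF \<open>\<zeta>' ^ 2 \<noteq> 1\<close>] show ?thesis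
    by blast
qed

end
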